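(* Let $G$ be a graph with girth $g(G)\ge 7$. Then every color class $C$ of a partition of $V(G)$ into $\chi_{\mu_2}(G)$ many $2$-distance mutual-visibility sets is a subset of the closed neighborhood $N_G[v]$ of some vertex $v$ of $G$. In particular, if $|C|\ge 3$, then $C$ is a subset of the open neighborhood $N_G(v)$ of some vertex $v$ of $G$.
   Context: The girth $g(G)$ is the length of a shortest cycle of $G$, with $g(G)=\infty$ if $G$ is a forest. $N_G(v)$ is the set of neighbors of $v$ and $N_G[v]=N_G(v)\cup\{v\}$. A set $M\subseteq V(G)$ is a $2$-distance mutual-visibility set if for every two vertices $u,v\in M$ there exists a shortest $u,v$-path of length at most $2$ none of whose internal vertices lies in $M$. $\chi_{\mu_2}(G)$ is the minimum cardinality of a partition of $V(G)$ into $2$-distance mutual-visibility sets. *)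

theory Defs
  imports Main "HOL-Library.Extended_Nat" "HOL-Library.Disjoint_Sets"
begin

definition simple_graph :: "'a set \<Rightarrow> ('a \<Rightarrow> 'a \<Rightarrow> bool) \<Rightarrow> bool" where
  "simple_graph V E \<longleftrightarrow> finite V \<and> (\<forall>u v. E u v \<longrightarrow> u \<in> V \<and> v \<in> V)
     \<and> (\<forall>u v. E u v \<longrightarrow> E v u) \<and> (\<forall>v. \<not> E v v)"

definition is_path :: "'a set \<Rightarrow> ('a \<Rightarrow> 'a \<Rightarrow> bool) \<Rightarrow> 'a list \<Rightarrow> bool" where
  "is_path V E p \<longleftrightarrow> p \<noteq> [] \<and> set p \<subseteq> V \<and> distinct p
     \<and> (\<forall>i. Suc i < length p \<longrightarrow> E (p ! i) (p ! Suc i))"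

definition path_between :: "'a set \<Rightarrow> ('a \<Rightarrow> 'a \<Rightarrow> bool) \<Rightarrow> 'a list \<Rightarrow> 'a \<Rightarrow> 'a \<Rightarrow> bool" where
  "path_between V E p u v \<longleftrightarrow> is_path V E p \<and> hd p = u \<and> last p = v"

text \<open>Distance (infinite if no path exists).\<close>
definition gdist :: "'a set \<Rightarrow> ('a \<Rightarrow> 'a \<Rightarrow> bool) \<Rightarrow> 'a \<Rightarrow> 'a \<Rightarrow> enat" where
  "gdist V E u v = Inf {enat (length p - 1) | p. path_between V E p u v}"

definition shortest_path :: "'a set \<Rightarrow> ('a \<Rightarrow> 'a \<Rightarrow> bool) \<Rightarrow> 'a list \<Rightarrow> 'a \<Rightarrow> 'a \<Rightarrow> bool" where
  "shortest_path V E p u v \<longleftrightarrow> path_between V E p u v \<and> enat (length p - 1) = gdist V E u v"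

text \<open>Cycles: at least 3 distinct vertices, consecutive adjacent, last adjacent to first.
  Girth = minimum cycle length, infinity for forests.\<close>
definition is_cycle :: "'a set \<Rightarrow> ('a \<Rightarrow> 'a \<Rightarrow> bool) \<Rightarrow> 'a list \<Rightarrow> bool" where
  "is_cycle V E c \<longleftrightarrow> length c \<ge> 3 \<and> is_path V E c \<and> E (last c) (hd c)"

definition girth :: "'a set \<Rightarrow> ('a \<Rightarrow> 'a \<Rightarrow> bool) \<Rightarrow> enat" where
  "girth V E = Inf {enat (length c) | c. is_cycle V E c}"

definition nbhd :: "'a set \<Rightarrow> ('a \<Rightarrow> 'a \<Rightarrow> bool) \<Rightarrow> 'a \<Rightarrow> 'a set" where
  "nbhd V E v = {u \<in> V. E v u}"

definition closed_nbhd :: "'a set \<Rightarrow> ('a \<Rightarrow> 'a \<Rightarrow> bool) \<Rightarrow> 'a \<Rightarrow> 'a set" where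
  "closed_nbhd V E v = insert v (nbhd V E v)"

definition mv2_set :: "'a set \<Rightarrow> ('a \<Rightarrow> 'a \<Rightarrow> bool) \<Rightarrow> 'a set \<Rightarrow> bool" where
  "mv2_set V E M \<longleftrightarrow> M \<subseteq> V \<and> (\<forall>u\<in>M. \<forall>v\<in>M. \<exists>p. shortest_path V E p u v
       \<and> length p - 1 \<le> 2 \<and> set (butlast (tl p)) \<inter> M = {})"

definition mv2_partition :: "'a set \<Rightarrow> ('a \<Rightarrow> 'a \<Rightarrow> bool) \<Rightarrow> 'a set set \<Rightarrow> bool" where
  "mv2_partition V E P \<longleftrightarrow> partition_on V P \<and> (\<forall>C\<in>P. mv2_set V E C)"

definition chi_mu2 :: "'a set \<Rightarrow> ('a \<Rightarrow> 'a \<Rightarrow> bool) \<Rightarrow> nat" where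
  "chi_mu2 V E = (LEAST k. \<exists>P. mv2_partition V E P \<and> card P = k)"

end

theory Submission
  imports Defs
begin

text \<open>In a graph of girth at least 7 the local configurations forced by 2-distance mutual
  visibility would close cycles of length at most 6. If a visibility set C contains an edge ab,
  any further vertex of C would see a and b along paths of length at most 2, closing a 3-, 4- or
  5-cycle through ab; so C \<subseteq> {a, b}. If C is independent with two vertices a, b, they have a
  common neighbour w, and any third vertex c of C reaches a and b through common neighbours;
  unless c is itself adjacent to w this closes a 4- or 6-cycle through a w b. Hence C lies in the
  neighbourhood of w.\<close>

lemma is_path_iff_successively:
  "is_path V E p \<longleftrightarrow> p \<noteq> [] \<and> set p \<subseteq> V \<and> distinct p \<and> successively E p"
  by (auto simp: is_path_def successively_conv_nth)

lemma cycle_length_ge_girth: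
  assumes "is_cycle V E c"
  shows "girth V E \<le> enat (length c)"
  unfolding girth_def using assms by (auto intro: Inf_lower)

lemma no_cycle_shorter_than_girth:
  assumes "simple_graph V E" "enat (length c) < girth V E"
    and "length c \<ge> 3" "distinct c" "successively E c" "E (last c) (hd c)"
  shows False
proof -
  have "set c \<subseteq> V"
  proof
    fix v assume "v \<in> set c"
    then obtain i where "i < length c" "c ! i = v" by (auto simp: in_set_conv_nth)
    moreover have "\<exists>u. E v u \<or> E u v"
    proof (cases "Suc i < length c")
      case True
      then show ?thesis using successively_nth[OF assms(5)] \<open>c ! i = v\<close> by blast
    next
      case False
      with \<open>i < length c\<close> have "i = length c - 1" by arith
      moreover have "c \<noteq> []" using assms(3) by auto
      ultimately have "v = last c" using \<open>c ! i = v\<close> by (simp add: last_conv_nth)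
      then show ?thesis using assms(6) by blast
    qed
    ultimately show "v \<in> V" using assms(1) unfolding simple_graph_def by blast
  qed
  then have "is_cycle V E c"
    using assms(3-6) by (auto simp: is_cycle_def is_path_iff_successively)
  then have "girth V E \<le> enat (length c)" by (rule cycle_length_ge_girth)
  with assms(2) show False by simp
qed

lemma no_cycle_of_length_le_6:
  assumes "simple_graph V E" "girth V E \<ge> 7"
    and "length c \<in> {3..6}" "distinct c" "successively E c" "E (last c) (hd c)"
  shows False
proof -
  have "enat (length c) < 7" using assms(3) by (simp add: numeral_eq_enat)
  also have "\<dots> \<le> girth V E" by fact
  finally show False using no_cycle_shorter_than_girth[OF assms(1) _ _ assms(4-6)] assms(3) by auto
qed

lemma mv2_set_adjacent_or_common_neighbour:
  assumes "mv2_set V E C" "x \<in> C" "y \<in> C" "x \<noteq> y"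
  shows "E x y \<or> (\<exists>w. w \<notin> C \<and> E x w \<and> E w y)"
proof -
  obtain p where p: "path_between V E p x y" "length p - 1 \<le> 2" "set (butlast (tl p)) \<inter> C = {}"
    using assms(1-3) unfolding mv2_set_def shortest_path_def by blast
  then show ?thesis
    using assms(4) by (cases p; cases "tl p"; cases "tl (tl p)")
      (auto simp: path_between_def is_path_iff_successively)
qed

lemma mv2_set_containing_edge_subset:
  assumes G: "simple_graph V E" and "girth V E \<ge> 7" and C: "mv2_set V E C"
    and ab: "a \<in> C" "b \<in> C" "E a b"
  shows "C \<subseteq> {a, b}"
proof
  have sym: "E u v \<Longrightarrow> E v u" and irr: "\<not> E v v" for u v
    using G unfolding simple_graph_def by blast+
  note no_cycle = no_cycle_of_length_le_6[OF G \<open>girth V E \<ge> 7\<close>]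
  fix c assume c: "c \<in> C"
  show "c \<in> {a, b}"
  proof (rule ccontr)
    assume "c \<notin> {a, b}"
    then have ca: "c \<noteq> a" and cb: "c \<noteq> b" by auto
    have "a \<noteq> b" using ab irr by blast
    from mv2_set_adjacent_or_common_neighbour[OF C c ab(1) ca]
      mv2_set_adjacent_or_common_neighbour[OF C c ab(2) cb]
    show False
    proof (elim disjE exE conjE)
      assume "E c a" "E c b"
      then show False using no_cycle[of "[a, b, c]"] ab \<open>a \<noteq> b\<close> ca cb sym by auto
    next
      fix w assume "E c a" "w \<notin> C" "E c w" "E w b"
      then show False using no_cycle[of "[a, b, w, c]"] ab c \<open>a \<noteq> b\<close> ca cb sym by auto
    next
      fix w assume "E c b" "w \<notin> C" "E c w" "E w a"
      then show False using no_cycle[of "[a, b, c, w]"] ab c \<open>a \<noteq> b\<close> ca cb sym by auto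
    next
      fix w1 w2 assume w: "w1 \<notin> C" "E c w1" "E w1 a" "w2 \<notin> C" "E c w2" "E w2 b"
      show False
      proof (cases "w1 = w2")
        case True
        then show False using no_cycle[of "[a, b, w1]"] w ab \<open>a \<noteq> b\<close> sym by auto
      next
        case False
        then show False
          using no_cycle[of "[a, b, w2, c, w1]"] w ab c \<open>a \<noteq> b\<close> ca cb sym by auto
      qed
    qed
  qed
qed

lemma independent_mv2_set_subset_nbhd:
  assumes G: "simple_graph V E" and "girth V E \<ge> 7" and C: "mv2_set V E C"
    and indep: "\<forall>x\<in>C. \<forall>y\<in>C. \<not> E x y"
    and ab: "a \<in> C" "b \<in> C" "a \<noteq> b" and w: "E a w" "E w b"
  shows "C \<subseteq> nbhd V E w"
proof
  have sym: "E u v \<Longrightarrow> E v u" and in_V: "E u v \<Longrightarrow> v \<in> V" for u v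
    using G unfolding simple_graph_def by blast+
  note no_cycle = no_cycle_of_length_le_6[OF G \<open>girth V E \<ge> 7\<close>]
  have "w \<notin> C" using indep ab(1) w(1) by blast
  fix c assume c: "c \<in> C"
  have "E w c"
  proof (cases "c = a \<or> c = b")
    case True
    then show ?thesis using w sym by blast
  next
    case False
    then have ca: "c \<noteq> a" and cb: "c \<noteq> b" by auto
    obtain w1 where w1: "w1 \<notin> C" "E c w1" "E w1 a"
      using mv2_set_adjacent_or_common_neighbour[OF C c ab(1) ca] indep c ab(1) by blast
    obtain w2 where w2: "w2 \<notin> C" "E c w2" "E w2 b"
      using mv2_set_adjacent_or_common_neighbour[OF C c ab(2) cb] indep c ab(2) by blast
    show "E w c"
    proof (rule ccontr)
      assume "\<not> E w c"
      then have "w1 \<noteq> w" "w2 \<noteq> w" using w1 w2 sym by auto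
      show False
      proof (cases "w1 = w2")
        case True
        then show False
          using no_cycle[of "[a, w, b, w1]"] w w1 w2 ab \<open>w \<notin> C\<close> \<open>w1 \<noteq> w\<close> sym by auto
      next
        case False
        then show False
          using no_cycle[of "[a, w, b, w2, c, w1]"] w w1 w2 ab c ca cb \<open>w \<notin> C\<close>
            \<open>w1 \<noteq> w\<close> \<open>w2 \<noteq> w\<close> sym by auto
      qed
    qed
  qed
  then show "c \<in> nbhd V E w" unfolding nbhd_def using in_V by blast
qed

lemma mv2_set_subset_nbhd:
  assumes G: "simple_graph V E" and g: "girth V E \<ge> 7" and C: "mv2_set V E C"
    and "card C \<ge> 3"
  shows "\<exists>v\<in>V. C \<subseteq> nbhd V E v"
proof -
  have indep: "\<forall>x\<in>C. \<forall>y\<in>C. \<not> E x y"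
  proof (intro ballI notI)
    fix x y assume "x \<in> C" "y \<in> C" "E x y"
    then have "card C \<le> card {x, y}"
      using mv2_set_containing_edge_subset[OF G g C] by (intro card_mono) auto
    also have "\<dots> \<le> 2" by (simp add: card_insert_if)
    finally show False using \<open>card C \<ge> 3\<close> by simp
  qed
  have "finite C" "\<not> card C \<le> Suc 0"
    using \<open>card C \<ge> 3\<close> by (auto intro: card_ge_0_finite)
  then obtain a b where ab: "a \<in> C" "b \<in> C" "a \<noteq> b"
    using card_le_Suc0_iff_eq by blast
  then obtain w where w: "E a w" "E w b"
    using mv2_set_adjacent_or_common_neighbour[OF C] indep by blast
  then have "w \<in> V" using G unfolding simple_graph_def by blast
  with independent_mv2_set_subset_nbhd[OF G g C indep ab w] show ?thesis by blast
qed

lemma mv2_set_subset_closed_nbhd: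
  assumes G: "simple_graph V E" and g: "girth V E \<ge> 7" and C: "mv2_set V E C"
    and "C \<noteq> {}"
  shows "\<exists>v\<in>V. C \<subseteq> closed_nbhd V E v"
proof -
  have in_V: "E u v \<Longrightarrow> u \<in> V \<and> v \<in> V" for u v
    using G unfolding simple_graph_def by blast
  consider (edge) a b where "a \<in> C" "b \<in> C" "E a b"
    | (singleton) a where "C = {a}"
    | (independent) a b where "\<forall>x\<in>C. \<forall>y\<in>C. \<not> E x y" "a \<in> C" "b \<in> C" "a \<noteq> b"
    using \<open>C \<noteq> {}\<close> by blast
  then show ?thesis
  proof cases
    case (edge a b)
    then have "C \<subseteq> closed_nbhd V E a"
      using mv2_set_containing_edge_subset[OF G g C edge] in_V[OF edge(3)]
      by (auto simp: closed_nbhd_def nbhd_def)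
    with edge in_V show ?thesis by blast
  next
    case (singleton a)
    then show ?thesis using C by (auto simp: closed_nbhd_def mv2_set_def)
  next
    case (independent a b)
    then obtain w where w: "E a w" "E w b"
      using mv2_set_adjacent_or_common_neighbour[OF C] by blast
    then have "C \<subseteq> closed_nbhd V E w"
      using independent_mv2_set_subset_nbhd[OF G g C independent w]
      by (auto simp: closed_nbhd_def)
    with w in_V show ?thesis by blast
  qed
qed

theorem lemma3p3:
  fixes V :: "'a set" and E :: "'a \<Rightarrow> 'a \<Rightarrow> bool" and P :: "'a set set" and C :: "'a set"
  assumes "simple_graph V E"
    and "girth V E \<ge> 7"
    and "mv2_partition V E P"
    and "card P = chi_mu2 V E"
    and "C \<in> P"
  shows "(\<exists>v\<in>V. C \<subseteq> closed_nbhd V E v) \<and> (card C \<ge> 3 \<longrightarrow> (\<exists>v\<in>V. C \<subseteq> nbhd V E v))"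
proof -
  have "mv2_set V E C" "C \<noteq> {}"
    using assms(3,5) unfolding mv2_partition_def partition_on_def by auto
  then show ?thesis
    using mv2_set_subset_closed_nbhd[OF assms(1,2)] mv2_set_subset_nbhd[OF assms(1,2)] by blast
qed

end
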